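(* Let $m$ be a positive integer, $\gamma=(f,g,h)\in C^m(\mathbb{R},\mathbb{R}^3)$ and $K\subseteq\mathbb{R}$ compact. Suppose $\alpha$ is a modulus of continuity such that, for all $x,y$ in an interval containing $K$ and for $\phi\in\{f,g\}$, $$|\phi^{(m)}(x)-\phi^{(m)}(y)|\le\alpha(|x-y|),\quad |\phi(y)-T^m_x\phi(y)|\le\alpha(|x-y|)|x-y|^m,\quad |\phi'(y)-(T^m_x\phi)'(y)|\le\alpha(|x-y|)|x-y|^{m-1}.$$ Then there is a constant $C>0$ depending only on $\gamma$ and $K$ such that for all $a,b\in K$, $$|A(\gamma;b,a)|\le C\big(|A(\gamma;a,b)|+\alpha(|b-a|)|b-a|^m\big).$$
   Context: $C^m(\mathbb{R},\mathbb{R}^3)$: curves whose components are $m$-times continuously differentiable with bounded $m$th derivative. A modulus of continuity is a continuous, increasing, concave $\alpha:[0,\infty)\to[0,\infty)$ with $\alpha(0)=0$. $T^m_x\phi(y)=\sum_{k=0}^m\frac{\phi^{(k)}(x)}{k!}(y-x)^k$, written $T_x\phi$. For $a,b\in\mathbb{R}$ (in either order, with oriented integrals): $A(\gamma;a,b)= h(b)-h(a)-2\int_a^b\big((T_af)'T_ag-(T_ag)'T_af\big) + 2f(a)(g(b)-T_ag(b)) - 2g(a)(f(b)-T_af(b))$. *)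

theory Defs
  imports "HOL-Analysis.Analysis"
begin

abbreviation nderiv :: "nat \<Rightarrow> (real \<Rightarrow> real) \<Rightarrow> real \<Rightarrow> real" where
  "nderiv k \<phi> \<equiv> (deriv ^^ k) \<phi>"

definition Cm :: "nat \<Rightarrow> (real \<Rightarrow> real) \<Rightarrow> bool" where
  "Cm m \<phi> \<longleftrightarrow>
     (\<forall>k<m. \<forall>x. (nderiv k \<phi> has_real_derivative nderiv (Suc k) \<phi> x) (at x))
     \<and> continuous_on UNIV (nderiv m \<phi>)
     \<and> bounded (range (nderiv m \<phi>))"

definition modulus_of_continuity :: "(real \<Rightarrow> real) \<Rightarrow> bool" where
  "modulus_of_continuity \<alpha> \<longleftrightarrow>
     continuous_on {0..} \<alpha> \<and> mono_on {0..} \<alpha> \<and> concave_on {0..} \<alpha>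
     \<and> \<alpha> 0 = 0 \<and> (\<forall>t\<ge>0. \<alpha> t \<ge> 0)"

definition taylor :: "nat \<Rightarrow> (real \<Rightarrow> real) \<Rightarrow> real \<Rightarrow> real \<Rightarrow> real" where
  "taylor m \<phi> x y = (\<Sum>k\<le>m. nderiv k \<phi> x / fact k * (y - x) ^ k)"

definition oint :: "(real \<Rightarrow> real) \<Rightarrow> real \<Rightarrow> real \<Rightarrow> real" where
  "oint F a b = (if a \<le> b then integral {a..b} F else - integral {b..a} F)"

definition Aarea :: "nat \<Rightarrow> (real \<Rightarrow> real) \<Rightarrow> (real \<Rightarrow> real) \<Rightarrow> (real \<Rightarrow> real)
                      \<Rightarrow> real \<Rightarrow> real \<Rightarrow> real" where
  "Aarea m f g h a b =
     h b - h a
     - 2 * oint (\<lambda>t. deriv (taylor m f a) t * taylor m g a t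
                    - deriv (taylor m g a) t * taylor m f a t) a b
     + 2 * f a * (g b - taylor m g a b)
     - 2 * g a * (f b - taylor m f a b)"

end

theory Submission
  imports Defs
begin

text \<open>
  The h-terms of A(a,b) and A(b,a) cancel and their two oriented integrals combine into a single
  integral over [a,b] of the difference of the Taylor area integrands
  (T_a f)' T_a g - (T_a g)' T_a f and (T_b f)' T_b g - (T_b g)' T_b f.
  By the Taylor remainder hypotheses both are within O(\<alpha>(r) r^(m-1)), r = |b - a|, of the area
  integrand f' g - g' f of the curve itself, so the integral is O(\<alpha>(r) r^m); the four boundary
  terms are O(\<alpha>(r) r^m) directly. Hence |A(a,b) + A(b,a)| \<le> C \<alpha>(r) r^m, where C only depends on
  bounds for the first m derivatives of f and g on an interval containing K.
\<close>

lemma continuous_on_nderiv: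
  assumes "Cm m \<phi>" "k \<le> m"
  shows "continuous_on UNIV (nderiv k \<phi>)"
proof (cases "k = m")
  case True
  then show ?thesis using assms(1) by (simp add: Cm_def)
next
  case False
  then have "\<forall>x. (nderiv k \<phi> has_real_derivative nderiv (Suc k) \<phi> x) (at x)"
    using assms by (simp add: Cm_def)
  then show ?thesis by (metis DERIV_isCont continuous_at_imp_continuous_on)
qed

lemma Cm_nderivs_bounded:
  assumes "finite \<Phi>" "\<forall>\<phi>\<in>\<Phi>. Cm m \<phi>" "compact S"
  shows "\<exists>B. \<forall>\<phi>\<in>\<Phi>. \<forall>k\<le>m. \<forall>x\<in>S. \<bar>nderiv k \<phi> x\<bar> \<le> B"
proof -
  have "compact (\<Union>\<phi>\<in>\<Phi>. \<Union>k\<le>m. nderiv k \<phi> ` S)"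
    using assms by (auto intro!: compact_continuous_image continuous_on_nderiv
        intro: continuous_on_subset[OF _ subset_UNIV])
  then obtain B where "\<forall>y\<in>(\<Union>\<phi>\<in>\<Phi>. \<Union>k\<le>m. nderiv k \<phi> ` S). \<bar>y\<bar> \<le> B"
    by (metis bounded_iff compact_imp_bounded real_norm_def)
  then show ?thesis by auto
qed

lemma has_real_derivative_taylor:
  "(taylor m \<phi> x has_real_derivative
     (\<Sum>k\<le>m. nderiv k \<phi> x / fact k * (real k * (y - x) ^ (k - 1)))) (at y)"
  unfolding taylor_def[abs_def]
  by (auto intro!: derivative_eq_intros sum.cong simp: mult_ac)

lemma deriv_taylor:
  "deriv (taylor m \<phi> x) = (\<lambda>y. \<Sum>k\<le>m. nderiv k \<phi> x / fact k * (real k * (y - x) ^ (k - 1)))"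
  using has_real_derivative_taylor DERIV_imp_deriv by blast

lemma continuous_on_taylor: "continuous_on S (taylor m \<phi> x)"
  unfolding taylor_def[abs_def] by (intro continuous_intros)

lemma continuous_on_deriv_taylor: "continuous_on S (deriv (taylor m \<phi> x))"
  unfolding deriv_taylor by (intro continuous_intros)

lemma abs_taylor_le:
  assumes "\<forall>k\<le>m. \<bar>nderiv k \<phi> x\<bar> \<le> B" "\<bar>y - x\<bar> \<le> D"
  shows "\<bar>taylor m \<phi> x y\<bar> \<le> (\<Sum>k\<le>m. B * D ^ k)"
  unfolding taylor_def
proof (rule order_trans[OF sum_abs], rule sum_mono)
  fix k assume "k \<in> {..m}"
  have "\<bar>nderiv k \<phi> x\<bar> / fact k \<le> \<bar>nderiv k \<phi> x\<bar>"
    using divide_left_mono[of 1 "fact k" "\<bar>nderiv k \<phi> x\<bar>"] by simp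
  also have "\<dots> \<le> B"
    using assms(1) \<open>k \<in> {..m}\<close> by simp
  finally have "\<bar>nderiv k \<phi> x\<bar> / fact k \<le> B" .
  moreover have "\<bar>y - x\<bar> ^ k \<le> D ^ k"
    using assms(2) by (simp add: power_mono)
  ultimately have "\<bar>nderiv k \<phi> x\<bar> / fact k * \<bar>y - x\<bar> ^ k \<le> B * D ^ k"
    by (intro mult_mono') auto
  then show "\<bar>nderiv k \<phi> x / fact k * (y - x) ^ k\<bar> \<le> B * D ^ k"
    by (simp add: abs_mult power_abs)
qed

lemma oint_reverse: "oint F b a = - oint F a b"
  by (cases a b rule: linorder_cases) (simp_all add: oint_def)

lemma oint_diff:
  assumes "continuous_on {min a b..max a b} F" "continuous_on {min a b..max a b} G"
  shows "oint (\<lambda>t. F t - G t) a b = oint F a b - oint G a b"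
  using assms by (cases "a \<le> b")
    (simp_all add: oint_def integral_diff integrable_continuous_real min_def max_def)

lemma abs_oint_le:
  assumes "continuous_on {min a b..max a b} F" "\<And>t. t \<in> {min a b..max a b} \<Longrightarrow> \<bar>F t\<bar> \<le> M"
  shows "\<bar>oint F a b\<bar> \<le> M * \<bar>b - a\<bar>"
proof (cases "a \<le> b")
  case True
  then have "norm (integral {a..b} F) \<le> M * (b - a)"
    using assms by (intro integral_bound) auto
  then show ?thesis using True by (simp add: oint_def)
next
  case False
  then have "norm (integral {b..a} F) \<le> M * (a - b)"
    using assms by (intro integral_bound) auto
  then show ?thesis using False by (simp add: oint_def)
qed

lemma abs_wedge_diff_le:
  fixes F G F' G' u v u' v' :: real
  assumes "\<bar>F' - u'\<bar> \<le> d" "\<bar>G' - v'\<bar> \<le> d" "\<bar>F - u\<bar> \<le> e" "\<bar>G - v\<bar> \<le> e"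
    and "\<bar>F\<bar> \<le> M" "\<bar>G\<bar> \<le> M" "\<bar>u'\<bar> \<le> B" "\<bar>v'\<bar> \<le> B"
  shows "\<bar>(F' * G - G' * F) - (u' * v - v' * u)\<bar> \<le> 2 * (d * M + B * e)"
proof -
  have triangle: "\<bar>p + q - r - s\<bar> \<le> \<bar>p\<bar> + \<bar>q\<bar> + \<bar>r\<bar> + \<bar>s\<bar>" for p q r s :: real
    by linarith
  have bounds: "\<bar>(F' - u') * G\<bar> \<le> d * M" "\<bar>u' * (G - v)\<bar> \<le> B * e"
    "\<bar>(G' - v') * F\<bar> \<le> d * M" "\<bar>v' * (F - u)\<bar> \<le> B * e"
    using assms by (simp_all add: abs_mult mult_mono')
  have "(F' * G - G' * F) - (u' * v - v' * u)
      = (F' - u') * G + u' * (G - v) - (G' - v') * F - v' * (F - u)"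
    by (simp add: algebra_simps)
  also have "\<bar>\<dots>\<bar> \<le> \<bar>(F' - u') * G\<bar> + \<bar>u' * (G - v)\<bar> + \<bar>(G' - v') * F\<bar> + \<bar>v' * (F - u)\<bar>"
    by (rule triangle)
  also have "\<dots> \<le> d * M + B * e + d * M + B * e"
    by (intro add_mono bounds)
  finally show ?thesis
    by (simp add: algebra_simps)
qed

definition taylor_area_integrand ::
    "nat \<Rightarrow> (real \<Rightarrow> real) \<Rightarrow> (real \<Rightarrow> real) \<Rightarrow> real \<Rightarrow> real \<Rightarrow> real" where
  "taylor_area_integrand m f g x t =
     deriv (taylor m f x) t * taylor m g x t - deriv (taylor m g x) t * taylor m f x t"

lemma continuous_on_taylor_area_integrand: "continuous_on S (taylor_area_integrand m f g x)"
  unfolding taylor_area_integrand_def[abs_def]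
  by (intro continuous_intros continuous_on_taylor continuous_on_deriv_taylor)

lemma Aarea_add_swap:
  "Aarea m f g h a b + Aarea m f g h b a =
     - 2 * oint (\<lambda>t. taylor_area_integrand m f g a t - taylor_area_integrand m f g b t) a b
     + 2 * f a * (g b - taylor m g a b) - 2 * g a * (f b - taylor m f a b)
     + 2 * f b * (g a - taylor m g b a) - 2 * g b * (f a - taylor m f b a)"
proof -
  have Aarea_eq: "Aarea m f g h x y = h y - h x - 2 * oint (taylor_area_integrand m f g x) x y
      + 2 * f x * (g y - taylor m g x y) - 2 * g x * (f y - taylor m f x y)" for x y
    unfolding Aarea_def taylor_area_integrand_def[abs_def] ..
  have "oint (\<lambda>t. taylor_area_integrand m f g a t - taylor_area_integrand m f g b t) a b
      = oint (taylor_area_integrand m f g a) a b - oint (taylor_area_integrand m f g b) a b"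
    by (intro oint_diff continuous_on_taylor_area_integrand)
  then show ?thesis
    using Aarea_eq[of a b] Aarea_eq[of b a] oint_reverse[of "taylor_area_integrand m f g b" a b]
    by linarith
qed

lemma Aarea_add_swap_bound:
  assumes remainder: "\<And>\<phi> x t. \<phi> \<in> {f, g} \<Longrightarrow> x \<in> {a, b} \<Longrightarrow> t \<in> {min a b..max a b} \<Longrightarrow>
        \<bar>\<phi> t - taylor m \<phi> x t\<bar> \<le> e \<and> \<bar>deriv \<phi> t - deriv (taylor m \<phi> x) t\<bar> \<le> d"
    and taylor_bound: "\<And>\<phi> x t. \<phi> \<in> {f, g} \<Longrightarrow> x \<in> {a, b} \<Longrightarrow> t \<in> {min a b..max a b} \<Longrightarrow>
        \<bar>taylor m \<phi> x t\<bar> \<le> M"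
    and curve_bound: "\<And>\<phi> t. \<phi> \<in> {f, g} \<Longrightarrow> t \<in> {min a b..max a b} \<Longrightarrow>
        \<bar>\<phi> t\<bar> \<le> B \<and> \<bar>deriv \<phi> t\<bar> \<le> B"
  shows "\<bar>Aarea m f g h a b + Aarea m f g h b a\<bar> \<le> 8 * ((d * M + B * e) * \<bar>b - a\<bar> + B * e)"
proof -
  let ?W = "taylor_area_integrand m f g"
  let ?Q = "\<lambda>t. deriv f t * g t - deriv g t * f t"
  have W_near_Q: "\<bar>?W x t - ?Q t\<bar> \<le> 2 * (d * M + B * e)"
    if "x \<in> {a, b}" "t \<in> {min a b..max a b}" for x t
    unfolding taylor_area_integrand_def
    by (rule abs_wedge_diff_le)
      (use that remainder[of _ x t] taylor_bound[of _ x t] curve_bound[of _ t] in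
        \<open>auto simp: abs_minus_commute\<close>)
  have oint_le: "\<bar>oint (\<lambda>t. ?W a t - ?W b t) a b\<bar> \<le> 4 * (d * M + B * e) * \<bar>b - a\<bar>"
  proof (rule abs_oint_le)
    show "continuous_on {min a b..max a b} (\<lambda>t. ?W a t - ?W b t)"
      by (intro continuous_intros continuous_on_taylor_area_integrand)
    fix t assume "t \<in> {min a b..max a b}"
    then show "\<bar>?W a t - ?W b t\<bar> \<le> 4 * (d * M + B * e)"
      using W_near_Q[of a t] W_near_Q[of b t] by auto
  qed
  have boundary: "\<bar>2 * \<phi> x * (\<psi> y - taylor m \<psi> x y)\<bar> \<le> 2 * (B * e)"
    if "\<phi> \<in> {f, g}" "\<psi> \<in> {f, g}" "x \<in> {a, b}" "y \<in> {a, b}" for \<phi> \<psi> x y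
  proof -
    have "y \<in> {min a b..max a b}" "x \<in> {min a b..max a b}"
      using that by auto
    then show ?thesis
      using that remainder[of \<psi> x y] curve_bound[of \<phi> x] by (auto simp: abs_mult intro!: mult_mono')
  qed
  have triangle: "\<bar>- 2 * i + p - q + u - v\<bar> \<le> 2 * \<bar>i\<bar> + \<bar>p\<bar> + \<bar>q\<bar> + \<bar>u\<bar> + \<bar>v\<bar>"
    for i p q u v :: real
    by linarith
  have "\<bar>Aarea m f g h a b + Aarea m f g h b a\<bar>
      \<le> 2 * \<bar>oint (\<lambda>t. ?W a t - ?W b t) a b\<bar>
        + \<bar>2 * f a * (g b - taylor m g a b)\<bar> + \<bar>2 * g a * (f b - taylor m f a b)\<bar>
        + \<bar>2 * f b * (g a - taylor m g b a)\<bar> + \<bar>2 * g b * (f a - taylor m f b a)\<bar>"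
    unfolding Aarea_add_swap by (rule triangle)
  also have "\<dots> \<le> 2 * (4 * (d * M + B * e) * \<bar>b - a\<bar>) + 4 * (2 * (B * e))"
    using oint_le boundary[of f g a b] boundary[of g f a b] boundary[of f g b a] boundary[of g f b a]
    by (simp only: insert_iff simp_thms True_implies_equals)
  finally show ?thesis
    by (simp add: algebra_simps)
qed

lemma remainder_le_on_segment:
  fixes \<alpha> :: "real \<Rightarrow> real"
  assumes "mono_on {0..} \<alpha>" "\<forall>s\<ge>0. \<alpha> s \<ge> 0" "is_interval I" "a \<in> I" "b \<in> I"
    and remainder: "\<forall>x\<in>I. \<forall>y\<in>I. \<bar>R x y\<bar> \<le> \<alpha> \<bar>x - y\<bar> * \<bar>x - y\<bar> ^ n"
    and "x \<in> {a, b}" "t \<in> {min a b..max a b}"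
  shows "\<bar>R x t\<bar> \<le> \<alpha> \<bar>b - a\<bar> * \<bar>b - a\<bar> ^ n"
proof -
  have "min a b \<in> I" "max a b \<in> I"
    using assms(4,5) by (simp_all add: min_def max_def)
  then have t_I: "t \<in> I"
    by (rule mem_is_interval_1_I[OF assms(3)]) (use assms(8) in auto)
  have x_I: "x \<in> I"
    using assms(4,5,7) by auto
  have "\<bar>R x t\<bar> \<le> \<alpha> \<bar>x - t\<bar> * \<bar>x - t\<bar> ^ n"
    by (rule remainder[rule_format, OF x_I t_I])
  also have "\<dots> \<le> \<alpha> \<bar>b - a\<bar> * \<bar>b - a\<bar> ^ n"
  proof -
    have dist_le: "\<bar>x - t\<bar> \<le> \<bar>b - a\<bar>"
      using assms(7,8) by (cases "a \<le> b") auto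
    then have "\<alpha> \<bar>x - t\<bar> \<le> \<alpha> \<bar>b - a\<bar>"
      using assms(1) by (simp add: mono_onD)
    then show ?thesis
      using assms(2) dist_le by (simp add: mult_mono' power_mono)
  qed
  finally show ?thesis .
qed

lemma Aarea_add_swap_le_modulus:
  fixes \<alpha> :: "real \<Rightarrow> real"
  assumes "m \<ge> 1" and mono: "mono_on {0..} \<alpha>" and nonneg: "\<forall>s\<ge>0. \<alpha> s \<ge> 0"
    and I: "is_interval I" "a \<in> I" "b \<in> I" and ab: "a \<in> {-R..R}" "b \<in> {-R..R}"
    and remainder: "\<forall>\<phi>\<in>{f, g}. \<forall>x\<in>I. \<forall>y\<in>I.
          \<bar>\<phi> y - taylor m \<phi> x y\<bar> \<le> \<alpha> \<bar>x - y\<bar> * \<bar>x - y\<bar> ^ m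
        \<and> \<bar>deriv \<phi> y - deriv (taylor m \<phi> x) y\<bar> \<le> \<alpha> \<bar>x - y\<bar> * \<bar>x - y\<bar> ^ (m - 1)"
    and nderiv_bound: "\<forall>\<phi>\<in>{f, g}. \<forall>k\<le>m. \<forall>x\<in>{-R..R}. \<bar>nderiv k \<phi> x\<bar> \<le> B"
  shows "\<bar>Aarea m f g h a b + Aarea m f g h b a\<bar>
    \<le> 8 * ((\<Sum>k\<le>m. B * (2 * R) ^ k) + B * (2 * R) + B) * (\<alpha> \<bar>b - a\<bar> * \<bar>b - a\<bar> ^ m)"
proof -
  define M where "M = (\<Sum>k\<le>m. B * (2 * R) ^ k)"
  define r where "r = \<bar>b - a\<bar>"
  define d where "d = \<alpha> r * r ^ (m - 1)"
  have segment: "{min a b..max a b} \<subseteq> {-R..R}"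
    using ab by auto
  have pow_m_split: "\<alpha> r * r ^ m = r * d"
    using \<open>m \<ge> 1\<close> by (simp add: d_def power_eq_if)
  have "\<bar>Aarea m f g h a b + Aarea m f g h b a\<bar> \<le> 8 * ((d * M + B * (r * d)) * \<bar>b - a\<bar> + B * (r * d))"
  proof (rule Aarea_add_swap_bound)
    fix \<phi> x t assume \<phi>: "\<phi> \<in> {f, g}" and x: "x \<in> {a, b}" and t: "t \<in> {min a b..max a b}"
    have "\<bar>\<phi> t - taylor m \<phi> x t\<bar> \<le> \<alpha> \<bar>b - a\<bar> * \<bar>b - a\<bar> ^ m"
      by (rule remainder_le_on_segment[OF mono nonneg I _ x t]) (use remainder \<phi> in blast)
    moreover have "\<bar>deriv \<phi> t - deriv (taylor m \<phi> x) t\<bar> \<le> \<alpha> \<bar>b - a\<bar> * \<bar>b - a\<bar> ^ (m - 1)"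
      by (rule remainder_le_on_segment[OF mono nonneg I _ x t]) (use remainder \<phi> in blast)
    ultimately show "\<bar>\<phi> t - taylor m \<phi> x t\<bar> \<le> r * d
      \<and> \<bar>deriv \<phi> t - deriv (taylor m \<phi> x) t\<bar> \<le> d"
      by (simp only: pow_m_split[symmetric]) (simp add: d_def r_def)
    show "\<bar>taylor m \<phi> x t\<bar> \<le> M"
      unfolding M_def using \<phi> x t segment ab nderiv_bound by (intro abs_taylor_le) auto
  next
    fix \<phi> t assume "\<phi> \<in> {f, g}" "t \<in> {min a b..max a b}"
    moreover from this(2) have "t \<in> {-R..R}"
      using segment by blast
    ultimately show "\<bar>\<phi> t\<bar> \<le> B \<and> \<bar>deriv \<phi> t\<bar> \<le> B"
      using nderiv_bound[rule_format, of \<phi> 0 t] nderiv_bound[rule_format, of \<phi> 1 t] \<open>m \<ge> 1\<close>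
      by simp
  qed
  also have "\<dots> = 8 * (M + B * r + B) * (\<alpha> r * r ^ m)"
    unfolding pow_m_split r_def[symmetric] by (simp add: algebra_simps)
  also have "\<dots> \<le> 8 * (M + B * (2 * R) + B) * (\<alpha> r * r ^ m)"
  proof -
    have "B \<ge> 0"
      using nderiv_bound ab(1) by (meson abs_ge_zero insertI1 le0 order_trans)
    then have "B * r \<le> B * (2 * R)"
      using ab by (intro mult_left_mono) (auto simp: r_def)
    then show ?thesis
      using nonneg by (intro mult_right_mono) (auto simp: r_def)
  qed
  finally show ?thesis
    unfolding M_def r_def .
qed

theorem lemma3p4:
  fixes m :: nat and f g h :: "real \<Rightarrow> real" and K :: "real set"
  assumes "m \<ge> 1"
    and "Cm m f" and "Cm m g" and "Cm m h"
    and "compact K"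
  shows "\<exists>C>0. \<forall>\<alpha> I. modulus_of_continuity \<alpha> \<and> is_interval I \<and> K \<subseteq> I \<and>
           (\<forall>\<phi>\<in>{f, g}. \<forall>x\<in>I. \<forall>y\<in>I.
              \<bar>nderiv m \<phi> x - nderiv m \<phi> y\<bar> \<le> \<alpha> \<bar>x - y\<bar>
            \<and> \<bar>\<phi> y - taylor m \<phi> x y\<bar> \<le> \<alpha> \<bar>x - y\<bar> * \<bar>x - y\<bar> ^ m
            \<and> \<bar>deriv \<phi> y - deriv (taylor m \<phi> x) y\<bar> \<le> \<alpha> \<bar>x - y\<bar> * \<bar>x - y\<bar> ^ (m - 1))
         \<longrightarrow> (\<forall>a\<in>K. \<forall>b\<in>K.
               \<bar>Aarea m f g h b a\<bar> \<le> C * (\<bar>Aarea m f g h a b\<bar> + \<alpha> \<bar>b - a\<bar> * \<bar>b - a\<bar> ^ m))"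
proof -
  obtain R where "R > 0" "\<forall>x\<in>K. norm x \<le> R"
    using compact_imp_bounded[OF \<open>compact K\<close>] unfolding bounded_pos by blast
  then have K_R: "K \<subseteq> {-R..R}"
    by (auto simp: abs_le_iff)
  obtain B where B: "\<forall>\<phi>\<in>{f, g}. \<forall>k\<le>m. \<forall>x\<in>{-R..R}. \<bar>nderiv k \<phi> x\<bar> \<le> B"
    using Cm_nderivs_bounded[of "{f, g}" m "{-R..R}"] \<open>Cm m f\<close> \<open>Cm m g\<close> by auto
  define C0 where "C0 = 8 * ((\<Sum>k\<le>m. B * (2 * R) ^ k) + B * (2 * R) + B)"
  show ?thesis
  proof (intro exI[of _ "max 1 C0"] conjI allI impI ballI)
    fix \<alpha> I a b
    assume H: "modulus_of_continuity \<alpha> \<and> is_interval I \<and> K \<subseteq> I \<and>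
           (\<forall>\<phi>\<in>{f, g}. \<forall>x\<in>I. \<forall>y\<in>I.
              \<bar>nderiv m \<phi> x - nderiv m \<phi> y\<bar> \<le> \<alpha> \<bar>x - y\<bar>
            \<and> \<bar>\<phi> y - taylor m \<phi> x y\<bar> \<le> \<alpha> \<bar>x - y\<bar> * \<bar>x - y\<bar> ^ m
            \<and> \<bar>deriv \<phi> y - deriv (taylor m \<phi> x) y\<bar> \<le> \<alpha> \<bar>x - y\<bar> * \<bar>x - y\<bar> ^ (m - 1))"
      and "a \<in> K" "b \<in> K"
    then have nonneg: "\<forall>s\<ge>0. \<alpha> s \<ge> 0" and mono: "mono_on {0..} \<alpha>"
      by (simp_all add: modulus_of_continuity_def)
    have "\<bar>Aarea m f g h a b + Aarea m f g h b a\<bar> \<le> C0 * (\<alpha> \<bar>b - a\<bar> * \<bar>b - a\<bar> ^ m)"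
      unfolding C0_def
    proof (rule Aarea_add_swap_le_modulus[OF \<open>m \<ge> 1\<close> mono nonneg _ _ _ _ _ _ B])
      show "\<forall>\<phi>\<in>{f, g}. \<forall>x\<in>I. \<forall>y\<in>I.
          \<bar>\<phi> y - taylor m \<phi> x y\<bar> \<le> \<alpha> \<bar>x - y\<bar> * \<bar>x - y\<bar> ^ m
        \<and> \<bar>deriv \<phi> y - deriv (taylor m \<phi> x) y\<bar> \<le> \<alpha> \<bar>x - y\<bar> * \<bar>x - y\<bar> ^ (m - 1)"
        using H by blast
    qed (use H \<open>a \<in> K\<close> \<open>b \<in> K\<close> K_R in auto)
    moreover have "C0 * (\<alpha> \<bar>b - a\<bar> * \<bar>b - a\<bar> ^ m) \<le> max 1 C0 * (\<alpha> \<bar>b - a\<bar> * \<bar>b - a\<bar> ^ m)"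
      using nonneg by (intro mult_right_mono) auto
    moreover have "\<bar>Aarea m f g h a b\<bar> \<le> max 1 C0 * \<bar>Aarea m f g h a b\<bar>"
      by (simp add: mult_le_cancel_right1)
    ultimately show "\<bar>Aarea m f g h b a\<bar> \<le> max 1 C0 * (\<bar>Aarea m f g h a b\<bar> + \<alpha> \<bar>b - a\<bar> * \<bar>b - a\<bar> ^ m)"
      unfolding distrib_left by linarith
  qed simp
qed

end
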